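(* Let $S$ be a commutative $\Gamma$-hemiring, let $\mu$ be a fuzzy h-interior-ideal of $S$ and let $x\in S$. Then $\langle x,\mu\rangle$ is a fuzzy h-interior-ideal of $S$.
   Context: A $\Gamma$-hemiring is a pair of additive commutative semigroups with zero $S$ and $\Gamma$ with a map $S\times\Gamma\times S\to S$, $(a,\alpha,b)\mapsto a\alpha b$, such that for all $a,b,c\in S$, $\alpha,\beta\in\Gamma$: $(a+b)\alpha c=a\alpha c+b\alpha c$; $a\alpha(b+c)=a\alpha b+a\alpha c$; $a(\alpha+\beta)b=a\alpha b+a\beta b$; $a\alpha(b\beta c)=(a\alpha b)\beta c$; $0\alpha a=0=a\alpha0$; $a0b=0=b0a$. It is commutative if $a\alpha b=b\alpha a$ for all $a,b\in S$, $\alpha\in\Gamma$. A fuzzy h-ideal of $S$ is a map $\mu:S\to[0,1]$, not identically $0$, such that for all $x,y,a,b,z\in S$, $\gamma\in\Gamma$: $\mu(x+y)\ge\min\{\mu(x),\mu(y)\}$; $\mu(x\gamma y)\ge\mu(x)$ and $\mu(x\gamma y)\ge\mu(y)$; $x+a+z=b+z$ implies $\mu(x)\ge\min\{\mu(a),\mu(b)\}$. A fuzzy h-interior-ideal is a fuzzy h-ideal $\mu$ with $\mu(x\alpha y\beta z)\ge\mu(y)$ for all $x,y,z\in S$, $\alpha,\beta\in\Gamma$. The extension of $\mu$ by $x$ is $\langle x,\mu\rangle(y)=\inf_{s\in S,\ \alpha,\gamma\in\Gamma}\mu(x\alpha s\gamma y)$. *)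

theory Defs
  imports Complex_Main
begin

definition gamma_hemiring :: "('a::comm_monoid_add \<Rightarrow> 'g::comm_monoid_add \<Rightarrow> 'a \<Rightarrow> 'a) \<Rightarrow> bool" where
  "gamma_hemiring m \<longleftrightarrow>
     (\<forall>a b c \<alpha>. m (a + b) \<alpha> c = m a \<alpha> c + m b \<alpha> c) \<and>
     (\<forall>a b c \<alpha>. m a \<alpha> (b + c) = m a \<alpha> b + m a \<alpha> c) \<and>
     (\<forall>a b \<alpha> \<beta>. m a (\<alpha> + \<beta>) b = m a \<alpha> b + m a \<beta> b) \<and>
     (\<forall>a b c \<alpha> \<beta>. m a \<alpha> (m b \<beta> c) = m (m a \<alpha> b) \<beta> c) \<and>
     (\<forall>a \<alpha>. m 0 \<alpha> a = 0 \<and> m a \<alpha> 0 = 0) \<and>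
     (\<forall>a b. m a 0 b = 0 \<and> m b 0 a = 0)"

definition commutative_gamma_hemiring :: "('a::comm_monoid_add \<Rightarrow> 'g::comm_monoid_add \<Rightarrow> 'a \<Rightarrow> 'a) \<Rightarrow> bool" where
  "commutative_gamma_hemiring m \<longleftrightarrow> gamma_hemiring m \<and> (\<forall>a b \<alpha>. m a \<alpha> b = m b \<alpha> a)"

definition fuzzy_h_ideal :: "('a::comm_monoid_add \<Rightarrow> 'g::comm_monoid_add \<Rightarrow> 'a \<Rightarrow> 'a) \<Rightarrow> ('a \<Rightarrow> real) \<Rightarrow> bool" where
  "fuzzy_h_ideal m \<mu> \<longleftrightarrow>
     (\<forall>x. 0 \<le> \<mu> x \<and> \<mu> x \<le> 1) \<and> (\<exists>x. \<mu> x \<noteq> 0) \<and>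
     (\<forall>x y. \<mu> (x + y) \<ge> min (\<mu> x) (\<mu> y)) \<and>
     (\<forall>x y \<gamma>. \<mu> (m x \<gamma> y) \<ge> \<mu> x \<and> \<mu> (m x \<gamma> y) \<ge> \<mu> y) \<and>
     (\<forall>x a b z. x + a + z = b + z \<longrightarrow> \<mu> x \<ge> min (\<mu> a) (\<mu> b))"

definition fuzzy_h_interior_ideal :: "('a::comm_monoid_add \<Rightarrow> 'g::comm_monoid_add \<Rightarrow> 'a \<Rightarrow> 'a) \<Rightarrow> ('a \<Rightarrow> real) \<Rightarrow> bool" where
  "fuzzy_h_interior_ideal m \<mu> \<longleftrightarrow> fuzzy_h_ideal m \<mu> \<and>
     (\<forall>x y z \<alpha> \<beta>. \<mu> (m (m x \<alpha> y) \<beta> z) \<ge> \<mu> y)"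

definition extension :: "('a::comm_monoid_add \<Rightarrow> 'g::comm_monoid_add \<Rightarrow> 'a \<Rightarrow> 'a) \<Rightarrow> 'a \<Rightarrow> ('a \<Rightarrow> real) \<Rightarrow> 'a \<Rightarrow> real" where
  "extension m x \<mu> y = (INF p \<in> (UNIV :: ('a \<times> 'g \<times> 'g) set).
      \<mu> (m (m x (fst (snd p)) (fst p)) (snd (snd p)) y))"

end

theory Submission
  imports Defs
begin

text \<open>Every value of the extension is an infimum of values of \<open>\<mu>\<close> at elements of the form
  \<open>x\<alpha>s\<gamma>y\<close>, so each closure property of \<open>\<mu>\<close> transfers to \<open>\<langle>x,\<mu>\<rangle>\<close> once the operation in
  question commutes with left multiplication by \<open>x\<alpha>s\<gamma>\<close>: additivity and the h-closure by
  distributivity in the right-hand argument, the ideal and interior properties by associativity (and, for the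
  right-hand factor, commutativity). Nonvanishing holds because \<open>\<langle>x,\<mu>\<rangle>(0) = \<mu>(0)\<close>, the
  largest value of \<open>\<mu>\<close>.\<close>

lemma extension_le:
  assumes "\<And>u. 0 \<le> \<mu> u"
  shows "extension m x \<mu> y \<le> \<mu> (m (m x \<alpha> s) \<gamma> y)"
proof -
  have "bdd_below ((\<lambda>p. \<mu> (m (m x (fst (snd p)) (fst p)) (snd (snd p)) y)) ` UNIV)"
    using assms by (intro bdd_belowI[where m = 0]) auto
  from cINF_lower[OF this, of "(s, \<alpha>, \<gamma>)"] show ?thesis
    by (simp add: extension_def)
qed

lemma extension_greatest:
  assumes "\<And>\<alpha> s \<gamma>. c \<le> \<mu> (m (m x \<alpha> s) \<gamma> y)"
  shows "c \<le> extension m x \<mu> y"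
  unfolding extension_def by (rule cINF_greatest) (auto intro: assms)

lemma extension_min_le:
  assumes "\<And>u. 0 \<le> \<mu> u"
  shows "min (extension m x \<mu> y) (extension m x \<mu> z)
           \<le> min (\<mu> (m (m x \<alpha> s) \<gamma> y)) (\<mu> (m (m x \<alpha> s) \<gamma> z))"
  by (intro min.mono extension_le assms)

lemma extension_at_zero:
  assumes "\<And>a \<gamma>. m a \<gamma> 0 = 0"
  shows "extension m x \<mu> 0 = \<mu> 0"
  by (simp add: extension_def assms)

lemma fuzzy_h_ideal_le_zero:
  assumes "gamma_hemiring m" "fuzzy_h_ideal m \<mu>"
  shows "\<mu> a \<le> \<mu> 0"
proof -
  have "m a 0 a = 0" using assms(1) by (simp add: gamma_hemiring_def)
  moreover have "\<mu> a \<le> \<mu> (m a 0 a)" using assms(2) by (simp add: fuzzy_h_ideal_def)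
  ultimately show ?thesis by simp
qed

lemma extension_fuzzy_h_ideal:
  assumes hemiring: "commutative_gamma_hemiring m" and ideal: "fuzzy_h_ideal m \<mu>"
  shows "fuzzy_h_ideal m (extension m x \<mu>)"
proof -
  let ?E = "extension m x \<mu>"
  have gh: "gamma_hemiring m"
    using hemiring by (simp add: commutative_gamma_hemiring_def)
  have distrib: "\<And>a b c \<alpha>. m a \<alpha> (b + c) = m a \<alpha> b + m a \<alpha> c"
   and assoc: "\<And>a b c \<alpha> \<beta>. m a \<alpha> (m b \<beta> c) = m (m a \<alpha> b) \<beta> c"
   and zero: "\<And>a \<gamma>. m a \<gamma> 0 = 0"
   and comm: "\<And>a b \<alpha>. m a \<alpha> b = m b \<alpha> a"
    using hemiring unfolding commutative_gamma_hemiring_def gamma_hemiring_def by meson+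
  have range: "\<And>u. 0 \<le> \<mu> u \<and> \<mu> u \<le> 1" and nonzero: "\<exists>u. \<mu> u \<noteq> 0"
   and add: "\<And>u v. min (\<mu> u) (\<mu> v) \<le> \<mu> (u + v)"
   and mult: "\<And>u v \<gamma>. \<mu> u \<le> \<mu> (m u \<gamma> v)"
   and h_closed: "\<And>u a b z. u + a + z = b + z \<Longrightarrow> min (\<mu> a) (\<mu> b) \<le> \<mu> u"
    using ideal unfolding fuzzy_h_ideal_def by meson+
  have nonneg: "\<And>u. 0 \<le> \<mu> u" using range by blast
  have E_range: "0 \<le> ?E y \<and> ?E y \<le> 1" for y
  proof
    show "0 \<le> ?E y" by (rule extension_greatest) (rule nonneg)
    have "?E y \<le> \<mu> (m (m x 0 0) 0 y)" by (rule extension_le[OF nonneg])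
    also have "\<dots> \<le> 1" using range by blast
    finally show "?E y \<le> 1" .
  qed
  have E_nonzero: "?E 0 \<noteq> 0"
  proof -
    obtain a where "\<mu> a \<noteq> 0" using nonzero by blast
    with fuzzy_h_ideal_le_zero[OF gh ideal, of a] nonneg[of a] have "\<mu> 0 \<noteq> 0" by linarith
    moreover have "?E 0 = \<mu> 0" using zero by (rule extension_at_zero)
    ultimately show ?thesis by simp
  qed
  have E_add: "min (?E y) (?E z) \<le> ?E (y + z)" for y z
  proof (rule extension_greatest)
    fix \<alpha> s \<gamma>
    have "min (?E y) (?E z) \<le> min (\<mu> (m (m x \<alpha> s) \<gamma> y)) (\<mu> (m (m x \<alpha> s) \<gamma> z))"
      by (rule extension_min_le[OF nonneg])
    also have "\<dots> \<le> \<mu> (m (m x \<alpha> s) \<gamma> (y + z))"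
      unfolding distrib by (rule add)
    finally show "min (?E y) (?E z) \<le> \<mu> (m (m x \<alpha> s) \<gamma> (y + z))" .
  qed
  have E_mult: "?E y \<le> ?E (m y \<gamma> z)" for y z \<gamma>
  proof (rule extension_greatest)
    fix \<alpha> s \<beta>
    have "?E y \<le> \<mu> (m (m x \<alpha> s) \<beta> y)" by (rule extension_le[OF nonneg])
    also have "\<dots> \<le> \<mu> (m (m (m x \<alpha> s) \<beta> y) \<gamma> z)" by (rule mult)
    finally show "?E y \<le> \<mu> (m (m x \<alpha> s) \<beta> (m y \<gamma> z))" by (simp add: assoc)
  qed
  have E_mult_right: "?E z \<le> ?E (m y \<gamma> z)" for y z \<gamma>
    using E_mult[of z \<gamma> y] by (simp add: comm[of z])
  have E_h_closed: "min (?E a) (?E b) \<le> ?E y" if h: "y + a + z = b + z" for y a b z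
  proof (rule extension_greatest)
    fix \<alpha> s \<gamma>
    let ?c = "m (m x \<alpha> s) \<gamma>"
    have "?c y + ?c a + ?c z = ?c b + ?c z"
      using arg_cong[OF h, of ?c] by (simp add: distrib)
    then have "min (\<mu> (?c a)) (\<mu> (?c b)) \<le> \<mu> (?c y)" by (rule h_closed)
    with extension_min_le[OF nonneg] show "min (?E a) (?E b) \<le> \<mu> (?c y)"
      by (rule order_trans)
  qed
  show ?thesis
    unfolding fuzzy_h_ideal_def
    using E_range E_nonzero E_add E_mult E_mult_right E_h_closed by blast
qed

lemma extension_interior:
  assumes "gamma_hemiring m" "fuzzy_h_ideal m \<mu>"
  shows "extension m x \<mu> y \<le> extension m x \<mu> (m (m u \<alpha> y) \<beta> w)"
proof (rule extension_greatest)
  fix \<alpha>' s \<gamma>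
  have assoc: "\<And>a b c \<alpha> \<beta>. m a \<alpha> (m b \<beta> c) = m (m a \<alpha> b) \<beta> c"
    using assms(1) unfolding gamma_hemiring_def by meson
  have nonneg: "\<And>v. 0 \<le> \<mu> v" and mult: "\<And>v v' \<gamma>. \<mu> v \<le> \<mu> (m v \<gamma> v')"
    using assms(2) unfolding fuzzy_h_ideal_def by meson+
  \<comment> \<open>absorb \<open>\<gamma>u\<close> into the middle factor: \<open>x\<alpha>'s\<gamma>(u\<alpha>y\<beta>w) = (x\<alpha>'(s\<gamma>u)\<alpha>y)\<beta>w\<close>\<close>
  have "extension m x \<mu> y \<le> \<mu> (m (m x \<alpha>' (m s \<gamma> u)) \<alpha> y)"
    by (rule extension_le[OF nonneg])
  also have "\<dots> \<le> \<mu> (m (m (m x \<alpha>' (m s \<gamma> u)) \<alpha> y) \<beta> w)"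
    by (rule mult)
  finally show "extension m x \<mu> y \<le> \<mu> (m (m x \<alpha>' s) \<gamma> (m (m u \<alpha> y) \<beta> w))"
    by (simp add: assoc)
qed

theorem proposition3p9:
  fixes m :: "'a::comm_monoid_add \<Rightarrow> 'g::comm_monoid_add \<Rightarrow> 'a \<Rightarrow> 'a"
    and \<mu> :: "'a \<Rightarrow> real" and x :: 'a
  assumes "commutative_gamma_hemiring m"
    and "fuzzy_h_interior_ideal m \<mu>"
  shows "fuzzy_h_interior_ideal m (extension m x \<mu>)"
proof -
  have ideal: "fuzzy_h_ideal m \<mu>"
    using assms(2) by (simp add: fuzzy_h_interior_ideal_def)
  have "gamma_hemiring m"
    using assms(1) by (simp add: commutative_gamma_hemiring_def)
  then show ?thesis
    unfolding fuzzy_h_interior_ideal_def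
    using extension_fuzzy_h_ideal[OF assms(1) ideal] extension_interior[OF _ ideal] by blast
qed

end
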